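(* Let $q$ be a prime power, $m\ge1$, $1\le k\le n$, $g_1,\dots,g_n\in\mathbb{F}_{q^m}$ linearly independent over $\mathbb{F}_q$, $\mathbf g=(g_1,\dots,g_n)$, $\mathbf r\in\mathbb{F}_{q^m}^n$. Let $B=\{b^{(1)},b^{(2)}\}$ be a minimal basis of the interpolation module $\mathfrak M(\mathbf r)$ with respect to the $(0,k-1)$-weighted term-over-position order, with $\mathrm{lpos}(b^{(i)})=i$ for $i=1,2$, and let $\ell_i$ be the $(0,k-1)$-weighted $q$-degree of $b^{(i)}$. Then $\ell_1+\ell_2=n+k-1$, or equivalently $\mathrm{qdeg}(b^{(1)}_1)+\mathrm{qdeg}(b^{(2)}_2)=n$, where $b^{(i)}=[b^{(i)}_1\ \ b^{(i)}_2]$.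
   Context: Write $[i]:=q^i$. A $q$-linearized polynomial is $f(x)=\sum_{i=0}^{d}a_ix^{[i]}$, $a_i\in\mathbb{F}_{q^m}$; if $a_d\ne0$, $d=\mathrm{qdeg}(f)$ ($\mathrm{qdeg}(0)=-\infty$). $\mathcal{L}_q(x,q^m)$ is the ring of these under addition and composition $\circ$. $\Pi_{\mathbf g}(x)=\prod_{u\in\langle g_1,\dots,g_n\rangle}(x-u)$ ($\mathbb{F}_q$-span), in $\mathcal{L}_q(x,q^m)$ of $q$-degree $n$. For $\mathbf r=(r_1,\dots,r_n)$, $\Lambda_{\mathbf g,\mathbf r}(x)=\sum_{i=1}^n(-1)^{n-i}r_i\det(\mathfrak D_i(\mathbf g,x))/\det(M_n(g_1,\dots,g_n))$ ($M_n(v_1,\dots,v_s)$ the $n\times s$ matrix with $(j,l)$ entry $v_l^{[j-1]}$, $\mathfrak D_i(\mathbf g,x)$ is $M_n(g_1,\dots,g_n,x)$ without column $i$), in $\mathcal{L}_q(x,q^m)$ with $\Lambda_{\mathbf g,\mathbf r}(g_i)=r_i$. $\mathfrak M(\mathbf r)$ is the set of all $\beta\circ[\Pi_{\mathbf g}\ \ 0]+\gamma\circ[-\Lambda_{\mathbf g,\mathbf r}\ \ x]$, $\beta,\gamma\in\mathcal{L}_q(x,q^m)$, where $h\circ[f_1\ f_2]=[h\circ f_1\ \ h\circ f_2]$. Monomials are $x^{[i]}e_j$, $j\in\{1,2\}$. $(0,k-1)$-weighted term-over-position order: with $w_1=0,w_2=k-1$, $x^{[i_1]}e_{j_1}<x^{[i_2]}e_{j_2}$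 iff $i_1+w_{j_1}<i_2+w_{j_2}$ or (equality and $j_1<j_2$). $\mathrm{lm},\mathrm{lt},\mathrm{lpos}$ of nonzero $f$: greatest monomial, that term with coefficient, its coordinate. The $(0,k-1)$-weighted $q$-degree of $[f_1\ f_2]$ is $\max\{\mathrm{qdeg}(f_1),\mathrm{qdeg}(f_2)+k-1\}$. A basis is a generating set with $\sum a_i\circ f^{(i)}=0\Rightarrow$ all $a_i=0$. $f$ reduces modulo a set $F$ of nonzero elements in one step if $h=f-\sum_i(b_ix^{[a_i]})\circ f^{(i)}$ for some $f^{(i)}\in F$, $b_i\in\mathbb{F}_{q^m}$, $a_i\ge0$ with $\mathrm{lm}(f)=x^{[a_i]}\circ\mathrm{lm}(f^{(i)})$ and $\mathrm{lt}(f)=\sum_i(b_ix^{[a_i]})\circ\mathrm{lt}(f^{(i)})$; $f$ is minimal w.r.t. $F$ if it cannot be so reduced; a basis $B$ is minimal if each $b\in B$ is minimal w.r.t. $B\setminus\{b\}$. *)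

theory Defs
  imports "HOL-Computational_Algebra.Polynomial" "HOL-Library.Product_Plus"
          "Jordan_Normal_Form.Determinant"
begin

definition is_prime_power :: "nat \<Rightarrow> bool" where
  "is_prime_power q \<longleftrightarrow> (\<exists>p e. prime p \<and> e \<ge> 1 \<and> q = p ^ e)"

text \<open>The subfield F_q of F_{q^m} (the type 'a, with CARD('a) = q^m).\<close>
definition Fq :: "nat \<Rightarrow> 'a::field set" where
  "Fq q = {x. x ^ q = x}"

definition lin_indep_Fq :: "nat \<Rightarrow> nat \<Rightarrow> (nat \<Rightarrow> 'a::field) \<Rightarrow> bool" where
  "lin_indep_Fq q n g \<longleftrightarrow>
     (\<forall>c. (\<forall>i\<in>{1..n}. c i \<in> Fq q) \<and> (\<Sum>i=1..n. c i * g i) = 0 \<longrightarrow> (\<forall>i\<in>{1..n}. c i = 0))"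

definition Fq_span :: "nat \<Rightarrow> nat \<Rightarrow> (nat \<Rightarrow> 'a::field) \<Rightarrow> 'a set" where
  "Fq_span q n g = {(\<Sum>i=1..n. c i * g i) | c. \<forall>i\<in>{1..n}. c i \<in> Fq q}"

definition Lq :: "nat \<Rightarrow> 'a::field poly set" where
  "Lq q = {f. \<forall>i. coeff f i \<noteq> 0 \<longrightarrow> (\<exists>j. i = q ^ j)}"

definition qcoeff :: "nat \<Rightarrow> 'a::field poly \<Rightarrow> nat \<Rightarrow> 'a" where
  "qcoeff q f i = coeff f (q ^ i)"

text \<open>q-degree; only used on nonzero polynomials (qdeg 0 = -infinity in the paper).\<close>
definition qdeg :: "nat \<Rightarrow> 'a::field poly \<Rightarrow> nat" where
  "qdeg q f = Max {i. qcoeff q f i \<noteq> 0}"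

text \<open>Composition of linearized polynomials is polynomial composition: h o f = pcompose h f.\<close>

definition Pi_g :: "nat \<Rightarrow> nat \<Rightarrow> (nat \<Rightarrow> 'a::field) \<Rightarrow> 'a poly" where
  "Pi_g q n g = (\<Prod>u\<in>Fq_span q n g. [:- u, 1:])"

definition Mn_g :: "nat \<Rightarrow> nat \<Rightarrow> (nat \<Rightarrow> 'a::field) \<Rightarrow> 'a mat" where
  "Mn_g q n g = mat n n (\<lambda>(j, l). g (l + 1) ^ (q ^ j))"

text \<open>D_i(g,x): M_n(g_1,...,g_n,x) with column i (1-based) removed; entries in 'a poly.\<close>
definition D_g :: "nat \<Rightarrow> nat \<Rightarrow> (nat \<Rightarrow> 'a::field) \<Rightarrow> nat \<Rightarrow> 'a poly mat" where
  "D_g q n g i = mat n n (\<lambda>(j, l).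
      let l' = (if l + 1 < i then l + 1 else l + 2)
      in if l' = n + 1 then monom 1 (q ^ j) else [: g l' ^ (q ^ j) :])"

definition Lambda_g :: "nat \<Rightarrow> nat \<Rightarrow> (nat \<Rightarrow> 'a::field) \<Rightarrow> (nat \<Rightarrow> 'a) \<Rightarrow> 'a poly" where
  "Lambda_g q n g r =
     (\<Sum>i=1..n. smult ((-1) ^ (n - i) * r i / det (Mn_g q n g)) (det (D_g q n g i)))"

type_synonym 'a lvec = "'a poly \<times> 'a poly"

definition vcomp :: "'a::field poly \<Rightarrow> 'a lvec \<Rightarrow> 'a lvec" where
  "vcomp h f = (pcompose h (fst f), pcompose h (snd f))"

definition Mmod :: "nat \<Rightarrow> nat \<Rightarrow> (nat \<Rightarrow> 'a::field) \<Rightarrow> (nat \<Rightarrow> 'a) \<Rightarrow> 'a lvec set" where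
  "Mmod q n g r = {vcomp \<beta> (Pi_g q n g, 0) + vcomp \<gamma> (- Lambda_g q n g r, monom 1 1)
                    | \<beta> \<gamma>. \<beta> \<in> Lq q \<and> \<gamma> \<in> Lq q}"

text \<open>monomial x^[i] e_j is represented by the pair (i,j), j in {1,2}\<close>
definition vcomp_j :: "nat \<Rightarrow> 'a lvec \<Rightarrow> 'a poly" where
  "vcomp_j j v = (if j = 1 then fst v else snd v)"

definition wt :: "nat \<Rightarrow> nat \<Rightarrow> nat" where
  "wt k j = (if j = 1 then 0 else k - 1)"

definition mono_less :: "nat \<Rightarrow> nat \<times> nat \<Rightarrow> nat \<times> nat \<Rightarrow> bool" where
  "mono_less k m1 m2 \<longleftrightarrow>
     fst m1 + wt k (snd m1) < fst m2 + wt k (snd m2) \<or>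
     (fst m1 + wt k (snd m1) = fst m2 + wt k (snd m2) \<and> snd m1 < snd m2)"

definition vsupp :: "nat \<Rightarrow> 'a::field lvec \<Rightarrow> (nat \<times> nat) set" where
  "vsupp q v = {(i, j). j \<in> {1, 2} \<and> qcoeff q (vcomp_j j v) i \<noteq> 0}"

definition lm :: "nat \<Rightarrow> nat \<Rightarrow> 'a::field lvec \<Rightarrow> nat \<times> nat" where
  "lm q k v = (THE m. m \<in> vsupp q v \<and> (\<forall>m'\<in>vsupp q v. m' \<noteq> m \<longrightarrow> mono_less k m' m))"

definition lpos :: "nat \<Rightarrow> nat \<Rightarrow> 'a::field lvec \<Rightarrow> nat" where
  "lpos q k v = snd (lm q k v)"

definition mterm :: "nat \<Rightarrow> 'a::field \<Rightarrow> nat \<times> nat \<Rightarrow> 'a lvec" where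
  "mterm q c m = (if snd m = 1 then (monom c (q ^ fst m), 0) else (0, monom c (q ^ fst m)))"

definition lterm :: "nat \<Rightarrow> nat \<Rightarrow> 'a::field lvec \<Rightarrow> 'a lvec" where
  "lterm q k v = mterm q (qcoeff q (vcomp_j (snd (lm q k v)) v) (fst (lm q k v))) (lm q k v)"

text \<open>(0,k-1)-weighted q-degree max{qdeg f1, qdeg f2 + k - 1}, with qdeg 0 = -infinity;
  for nonzero vectors.\<close>
definition wqdeg :: "nat \<Rightarrow> nat \<Rightarrow> 'a::field lvec \<Rightarrow> nat" where
  "wqdeg q k v =
     (if fst v = 0 then qdeg q (snd v) + (k - 1)
      else if snd v = 0 then qdeg q (fst v)
      else max (qdeg q (fst v)) (qdeg q (snd v) + (k - 1)))"

definition is_basis :: "nat \<Rightarrow> 'a::field lvec set \<Rightarrow> 'a lvec set \<Rightarrow> bool" where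
  "is_basis q M B \<longleftrightarrow> finite B \<and> B \<subseteq> M \<and>
     (\<forall>f\<in>M. \<exists>a. (\<forall>b\<in>B. a b \<in> Lq q) \<and> f = (\<Sum>b\<in>B. vcomp (a b) b)) \<and>
     (\<forall>a. (\<forall>b\<in>B. a b \<in> Lq q) \<and> (\<Sum>b\<in>B. vcomp (a b) b) = 0 \<longrightarrow> (\<forall>b\<in>B. a b = 0))"

text \<open>f reduces modulo F in one step (the reduct h = f - sum ... always exists once the
  b_i, a_i, f^(i) exist).\<close>
definition reduces :: "nat \<Rightarrow> nat \<Rightarrow> 'a::field lvec set \<Rightarrow> 'a lvec \<Rightarrow> bool" where
  "reduces q k F f \<longleftrightarrow> f \<noteq> 0 \<and>
     (\<exists>(s::nat) bs es fs. (\<forall>i<s. fs i \<in> F \<and>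
          lm q k f = (es i + fst (lm q k (fs i)), snd (lm q k (fs i)))) \<and>
        lterm q k f = (\<Sum>i<s. vcomp (monom (bs i) (q ^ es i)) (lterm q k (fs i))))"

definition minimal_wrt :: "nat \<Rightarrow> nat \<Rightarrow> 'a::field lvec set \<Rightarrow> 'a lvec \<Rightarrow> bool" where
  "minimal_wrt q k F f \<longleftrightarrow> \<not> reduces q k F f"

definition minimal_basis :: "nat \<Rightarrow> nat \<Rightarrow> 'a::field lvec set \<Rightarrow> 'a lvec set \<Rightarrow> bool" where
  "minimal_basis q k M B \<longleftrightarrow> is_basis q M B \<and> (\<forall>b\<in>B. minimal_wrt q k (B - {b}) b)"

end

theory Submission
  imports Defs "HOL-Number_Theory.Residues"
begin

hide_const (open) UnivPoly.monom UnivPoly.coeff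

text \<open>
  Count the vectors of \<open>\<M>(r)\<close> of \<open>(0,k-1)\<close>-weighted \<open>q\<close>-degree below \<open>N\<close> in two ways, with
  \<open>Q = q\<^sup>m\<close>. The leading positions of \<open>b\<^sub>1\<close> and \<open>b\<^sub>2\<close> differ, so the weighted \<open>q\<close>-degree of
  \<open>a \<circ> b\<^sub>1 + c \<circ> b\<^sub>2\<close> is \<open>max (qdeg a + \<ell>\<^sub>1) (qdeg c + \<ell>\<^sub>2)\<close> (predictable degree property), and
  there are \<open>Q\<^bsup>N-\<ell>\<^sub>1\<^esup> Q\<^bsup>N-\<ell>\<^sub>2\<^esup>\<close> such vectors. Through the generators \<open>[\<beta> \<circ> \<Pi> - \<gamma> \<circ> \<Lambda>, \<gamma>]\<close>
  there are \<open>Q\<^bsup>N-k+1\<^esup>\<close> choices of \<open>\<gamma>\<close>, and since \<open>\<Pi>\<close> is monic of \<open>q\<close>-degree \<open>n\<close>, right division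
  by \<open>\<Pi>\<close> leaves exactly \<open>Q\<^bsup>N-n\<^esup>\<close> choices of \<open>\<beta>\<close> for each \<open>\<gamma>\<close>. Comparing exponents gives
  \<open>\<ell>\<^sub>1 + \<ell>\<^sub>2 = n + k - 1\<close>.
\<close>

section \<open>Linearized polynomials\<close>

lemma pcompose_monom: "pcompose (monom c n) f = smult c (f ^ n)"
  by (induction n) (simp_all add: monom_0 monom_Suc pcompose_pCons mult.commute)

lemma degree_monom_diff:
  fixes c d :: "'a::field"
  assumes "b < a" "c \<noteq> 0"
  shows "degree (monom c a - monom d b) = a"
proof -
  have "degree (- monom d b) < degree (monom c a)"
    using assms degree_monom_le[of d b] by (simp add: degree_monom_eq)
  then show ?thesis
    using degree_add_eq_left[of "- monom d b" "monom c a"] assms by (simp add: degree_monom_eq)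
qed

lemma Lq_0 [simp]: "0 \<in> Lq q"
  by (simp add: Lq_def)

lemma Lq_monom [simp]: "monom c (q ^ j) \<in> Lq q"
  by (auto simp: Lq_def)

lemma Lq_add: "f \<in> Lq q \<Longrightarrow> g \<in> Lq q \<Longrightarrow> f + g \<in> Lq q"
proof -
  assume "f \<in> Lq q" "g \<in> Lq q"
  moreover have "coeff (f + g) i \<noteq> 0 \<Longrightarrow> coeff f i \<noteq> 0 \<or> coeff g i \<noteq> 0" for i
    by auto
  ultimately show ?thesis unfolding Lq_def by blast
qed

lemma Lq_uminus: "f \<in> Lq q \<Longrightarrow> - f \<in> Lq q"
  by (simp add: Lq_def)

lemma Lq_diff: "f \<in> Lq q \<Longrightarrow> g \<in> Lq q \<Longrightarrow> f - g \<in> Lq q"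
  using Lq_add[of f q "- g"] Lq_uminus[of g] by simp

lemma Lq_smult: "f \<in> Lq q \<Longrightarrow> smult c f \<in> Lq q"
  by (simp add: Lq_def)

lemma Lq_const_mult: "degree h = 0 \<Longrightarrow> f \<in> Lq q \<Longrightarrow> h * f \<in> Lq q"
proof -
  assume "degree h = 0" "f \<in> Lq q"
  then have "h * f = smult (coeff h 0) f" by (metis degree_0_id mult_smult_left mult_1 smult_one)
  with \<open>f \<in> Lq q\<close> show ?thesis by (simp add: Lq_smult)
qed

lemma Lq_sum: "(\<And>i. i \<in> A \<Longrightarrow> h i \<in> Lq q) \<Longrightarrow> sum h A \<in> Lq q"
  by (induction A rule: infinite_finite_induct) (auto intro: Lq_add)

locale q_linearized =
  fixes q e :: nat and ty :: "'a::field itself"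
  assumes prime_char: "prime CHAR('a)" and q_eq: "q = CHAR('a) ^ e" and e_pos: "1 \<le> e"
begin

lemma q_ge_2: "2 \<le> q"
proof -
  have "2 \<le> CHAR('a)" using prime_char prime_ge_2_nat by blast
  also have "\<dots> \<le> q" using e_pos prime_gt_0_nat[OF prime_char] by (simp add: q_eq self_le_power)
  finally show ?thesis .
qed

lemma qpow_inject [simp]: "q ^ i = q ^ j \<longleftrightarrow> i = j"
  using q_ge_2 by simp

lemma qpow_less_iff [simp]: "q ^ i < q ^ j \<longleftrightarrow> i < j"
  using q_ge_2 by simp

lemma qpow_le_iff [simp]: "q ^ i \<le> q ^ j \<longleftrightarrow> i \<le> j"
  using q_ge_2 by simp

lemma qpow_pos [simp]: "0 < q ^ i"
  using q_ge_2 by simp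

lemma less_qpow: "i < q ^ i"
proof -
  have "(2::nat) ^ i \<le> q ^ i" using q_ge_2 by (intro power_mono) auto
  then show ?thesis using less_exp[of i] by linarith
qed

lemma frobenius_add:
  fixes x y :: "'b::comm_semiring_1"
  assumes "CHAR('b) = CHAR('a)"
  shows "(x + y) ^ (q ^ t) = x ^ (q ^ t) + y ^ (q ^ t)"
  by (rule freshmans_dream'[where n = "e * t"]) (simp_all add: assms prime_char q_eq power_mult)

lemma frobenius_sum:
  fixes f :: "'c \<Rightarrow> 'b::comm_semiring_1"
  assumes "CHAR('b) = CHAR('a)"
  shows "sum f A ^ (q ^ t) = (\<Sum>i\<in>A. f i ^ (q ^ t))"
  by (rule freshmans_dream_sum'[where n = "e * t"]) (simp_all add: assms prime_char q_eq power_mult)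

lemma frobenius_uminus:
  fixes x :: "'b::comm_ring_1"
  assumes "CHAR('b) = CHAR('a)"
  shows "(- x) ^ (q ^ t) = - (x ^ (q ^ t))"
proof -
  have "0 = (x + - x) ^ (q ^ t)" using q_ge_2 by (simp add: power_0_left)
  also have "\<dots> = x ^ (q ^ t) + (- x) ^ (q ^ t)" by (rule frobenius_add[OF assms])
  finally show ?thesis by (simp add: eq_neg_iff_add_eq_0 add.commute)
qed

lemma Fq_0: "0 \<in> (Fq q :: 'a set)"
  using q_ge_2 by (simp add: Fq_def)

lemma Fq_uminus: "c \<in> (Fq q :: 'a set) \<Longrightarrow> - c \<in> Fq q"
  using frobenius_uminus[of c 1] by (simp add: Fq_def)

lemma Fq_add: "c \<in> (Fq q :: 'a set) \<Longrightarrow> d \<in> Fq q \<Longrightarrow> c + d \<in> Fq q"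
  using frobenius_add[of c d 1] by (simp add: Fq_def)

lemma Fq_diff: "c \<in> (Fq q :: 'a set) \<Longrightarrow> d \<in> Fq q \<Longrightarrow> c - d \<in> Fq q"
  using Fq_add[of c "- d"] Fq_uminus[of d] by simp

lemma Fq_power: "c \<in> (Fq q :: 'a set) \<Longrightarrow> c ^ (q ^ t) = c"
  by (induction t) (simp_all add: Fq_def power_Suc2 power_mult)

lemma Lq_coeff_0: "f \<in> Lq q \<Longrightarrow> coeff f 0 = 0"
  using q_ge_2 by (auto simp: Lq_def)

lemma Lq_eq_sum_monom:
  assumes "f \<in> Lq q" "degree f < q ^ N"
  shows "f = (\<Sum>j<N. monom (coeff f (q ^ j)) (q ^ j))"
proof (rule poly_eqI)
  fix i
  show "coeff f i = coeff (\<Sum>j<N. monom (coeff f (q ^ j)) (q ^ j)) i"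
  proof (cases "\<exists>j. i = q ^ j")
    case True
    then obtain j where j: "i = q ^ j" by blast
    have "j \<ge> N \<Longrightarrow> coeff f i = 0"
      using assms(2) j by (intro coeff_eq_0) (meson leD less_le_trans qpow_le_iff)
    then show ?thesis by (auto simp: coeff_sum j)
  next
    case False
    then have "coeff f i = 0" "\<forall>j. q ^ j \<noteq> i" using assms(1) by (auto simp: Lq_def)
    then show ?thesis by (simp add: coeff_sum)
  qed
qed

lemma pcompose_Lq_eq_sum:
  assumes "h \<in> Lq q" "degree h < q ^ N"
  shows "pcompose h f = (\<Sum>j<N. smult (coeff h (q ^ j)) (f ^ (q ^ j)))"
  by (subst Lq_eq_sum_monom[OF assms]) (simp add: pcompose_sum pcompose_monom)

lemma Lq_power:
  assumes "(f :: 'a poly) \<in> Lq q"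
  shows "f ^ (q ^ t) \<in> Lq q"
proof -
  obtain N where N: "degree f < q ^ N" using less_qpow by blast
  have "f ^ (q ^ t) = (\<Sum>j<N. monom (coeff f (q ^ j)) (q ^ j) ^ (q ^ t))"
    by (subst Lq_eq_sum_monom[OF assms N]) (simp add: frobenius_sum)
  also have "\<dots> = (\<Sum>j<N. monom (coeff f (q ^ j) ^ (q ^ t)) (q ^ (j + t)))"
    by (simp add: monom_power power_add)
  finally show ?thesis by (simp add: Lq_sum)
qed

lemma Lq_pcompose:
  assumes "h \<in> Lq q" "(f :: 'a poly) \<in> Lq q"
  shows "pcompose h f \<in> Lq q"
proof -
  obtain N where N: "degree h < q ^ N" using less_qpow by blast
  show ?thesis
    unfolding pcompose_Lq_eq_sum[OF assms(1) N] by (intro Lq_sum Lq_smult Lq_power assms(2))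
qed

text \<open>Composition with a linearized polynomial is additive, by the Frobenius identity.\<close>
lemma pcompose_Lq_add:
  assumes "h \<in> Lq q"
  shows "pcompose h (f + g :: 'a poly) = pcompose h f + pcompose h g"
proof -
  obtain N where N: "degree h < q ^ N" using less_qpow by blast
  show ?thesis
    unfolding pcompose_Lq_eq_sum[OF assms N] by (simp add: frobenius_add smult_add_right sum.distrib)
qed

lemma poly_Lq_Fq_mult:
  fixes h :: "'a poly"
  assumes "h \<in> Lq q" "c \<in> Fq q"
  shows "poly h (c * x) = c * poly h x"
proof -
  obtain N where N: "degree h < q ^ N" using less_qpow by blast
  show ?thesis
    by (subst (1 2) Lq_eq_sum_monom[OF assms(1) N])
       (simp add: poly_sum poly_monom power_mult_distrib Fq_power[OF assms(2)] sum_distrib_left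
         mult.left_commute)
qed

lemma degree_Lq:
  assumes "f \<in> Lq q" "f \<noteq> 0"
  obtains t where "degree f = q ^ t"
  using assms leading_coeff_neq_0[of f] that unfolding Lq_def by blast

lemma degree_Lq_pos:
  assumes "f \<in> Lq q" "f \<noteq> 0"
  shows "1 \<le> degree f"
proof -
  obtain t where "degree f = q ^ t" using degree_Lq[OF assms] .
  then show ?thesis using qpow_pos[of t] by linarith
qed

lemma finite_qcoeff_nonzero: "finite {i. qcoeff q f i \<noteq> 0}"
proof (rule finite_subset)
  show "{i. qcoeff q f i \<noteq> 0} \<subseteq> {..degree f}"
  proof
    fix i assume "i \<in> {i. qcoeff q f i \<noteq> 0}"
    then have "q ^ i \<le> degree f" by (simp add: qcoeff_def le_degree)
    then show "i \<in> {..degree f}" using less_qpow[of i] by simp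
  qed
qed simp

lemma qcoeff_le_qdeg: "qcoeff q f i \<noteq> 0 \<Longrightarrow> i \<le> qdeg q f"
  unfolding qdeg_def using finite_qcoeff_nonzero by (intro Max_ge) auto

lemma qdeg_eqI:
  assumes "f \<noteq> 0" "degree f = q ^ t"
  shows "qdeg q f = t"
proof -
  show ?thesis unfolding qdeg_def
  proof (rule Max_eqI)
    show "t \<in> {i. qcoeff q f i \<noteq> 0}"
      using assms leading_coeff_neq_0[of f] by (simp add: qcoeff_def)
    fix i assume "i \<in> {i. qcoeff q f i \<noteq> 0}"
    then have "q ^ i \<le> q ^ t" using le_degree[of f "q ^ i"] assms(2) by (simp add: qcoeff_def)
    then show "i \<le> t" by simp
  qed (rule finite_qcoeff_nonzero)
qed

lemma degree_Lq_eq_qdeg: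
  assumes "f \<in> Lq q" "f \<noteq> 0"
  shows "degree f = q ^ qdeg q f"
proof -
  obtain t where "degree f = q ^ t" using degree_Lq[OF assms] .
  then show ?thesis using qdeg_eqI[OF assms(2)] by simp
qed

lemma qcoeff_qdeg_nonzero:
  assumes "f \<in> Lq q" "f \<noteq> 0"
  shows "qcoeff q f (qdeg q f) \<noteq> 0"
  using degree_Lq_eq_qdeg[OF assms] assms(2) leading_coeff_neq_0[of f] by (simp add: qcoeff_def)

lemma frobenius_telescope:
  defines "T \<equiv> monom 1 q - monom 1 1 :: 'a poly"
  shows "T * (\<Sum>i<s. T ^ (q ^ i - 1)) = monom 1 (q ^ s) - monom 1 1"
proof -
  have T_power: "T ^ (q ^ i) = monom 1 (q ^ Suc i) - monom 1 (q ^ i)" for i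
  proof -
    have "T ^ (q ^ i) = (monom 1 q + - monom 1 1) ^ (q ^ i)" by (simp add: T_def)
    also have "\<dots> = monom 1 q ^ (q ^ i) + (- monom 1 1) ^ (q ^ i)" by (rule frobenius_add) simp
    also have "\<dots> = monom 1 (q ^ Suc i) - monom 1 (q ^ i)" by (simp add: frobenius_uminus monom_power)
    finally show ?thesis .
  qed
  have "T * (\<Sum>i<s. T ^ (q ^ i - 1)) = (\<Sum>i<s. T ^ Suc (q ^ i - 1))"
    by (simp add: sum_distrib_left)
  also have "\<dots> = (\<Sum>i<s. monom 1 (q ^ Suc i) - monom 1 (q ^ i))"
    using qpow_pos by (simp add: T_power)
  also have "\<dots> = monom 1 (q ^ s) - monom 1 (q ^ 0)"
    by (rule sum_lessThan_telescope[of "\<lambda>i. monom 1 (q ^ i)"])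
  finally show ?thesis by simp
qed

lemma Fq_span_0: "Fq_span q 0 g = {0}"
  by (auto simp: Fq_span_def)

lemma Fq_span_Suc:
  "Fq_span q (Suc j) g = (\<Union>c\<in>Fq q. (\<lambda>u. u + c * g (Suc j)) ` Fq_span q j g)"
proof
  show "Fq_span q (Suc j) g \<subseteq> (\<Union>c\<in>Fq q. (\<lambda>u. u + c * g (Suc j)) ` Fq_span q j g)"
  proof
    fix x assume "x \<in> Fq_span q (Suc j) g"
    then obtain c where c: "\<forall>i\<in>{1..Suc j}. c i \<in> Fq q" "x = (\<Sum>i=1..Suc j. c i * g i)"
      by (auto simp: Fq_span_def)
    then have "(\<Sum>i=1..j. c i * g i) \<in> Fq_span q j g" by (auto simp: Fq_span_def)
    then show "x \<in> (\<Union>c\<in>Fq q. (\<lambda>u. u + c * g (Suc j)) ` Fq_span q j g)"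
      using c by auto
  qed
  show "(\<Union>c\<in>Fq q. (\<lambda>u. u + c * g (Suc j)) ` Fq_span q j g) \<subseteq> Fq_span q (Suc j) g"
  proof
    fix x assume "x \<in> (\<Union>c\<in>Fq q. (\<lambda>u. u + c * g (Suc j)) ` Fq_span q j g)"
    then obtain c' c where c: "c' \<in> Fq q" "\<forall>i\<in>{1..j}. c i \<in> Fq q"
      and x: "x = (\<Sum>i=1..j. c i * g i) + c' * g (Suc j)"
      by (auto simp: Fq_span_def)
    have "(\<Sum>i=1..j. (c(Suc j := c')) i * g i) = (\<Sum>i=1..j. c i * g i)"
      by (intro sum.cong) auto
    then have "x = (\<Sum>i=1..Suc j. (c(Suc j := c')) i * g i)" using x by simp
    moreover have "\<forall>i\<in>{1..Suc j}. (c(Suc j := c')) i \<in> Fq q" using c by auto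
    ultimately show "x \<in> Fq_span q (Suc j) g" unfolding Fq_span_def by blast
  qed
qed

lemma Fq_span_Suc_translates_disjoint:
  assumes li: "lin_indep_Fq q n g" and j: "Suc j \<le> n"
    and c: "c1 \<in> Fq q" "c2 \<in> Fq q"
    and u: "u1 \<in> Fq_span q j g" "u2 \<in> Fq_span q j g"
    and eq: "u1 + c1 * g (Suc j) = u2 + c2 * g (Suc j)"
  shows "c1 = (c2 :: 'a)"
proof -
  obtain d1 where d1: "\<forall>i\<in>{1..j}. d1 i \<in> Fq q" "u1 = (\<Sum>i=1..j. d1 i * g i)"
    using u(1) by (auto simp: Fq_span_def)
  obtain d2 where d2: "\<forall>i\<in>{1..j}. d2 i \<in> Fq q" "u2 = (\<Sum>i=1..j. d2 i * g i)"
    using u(2) by (auto simp: Fq_span_def)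
  define d where "d i = (if i \<le> j then d1 i - d2 i else if i = Suc j then c1 - c2 else 0)" for i
  have "(\<Sum>i=1..n. d i * g i) = (\<Sum>i=1..Suc j. d i * g i)"
    using j by (intro sum.mono_neutral_right) (auto simp: d_def)
  also have "\<dots> = (\<Sum>i=1..j. (d1 i - d2 i) * g i) + (c1 - c2) * g (Suc j)"
    by (simp add: d_def)
  also have "\<dots> = (u1 + c1 * g (Suc j)) - (u2 + c2 * g (Suc j))"
    using d1(2) d2(2) by (simp add: sum_subtractf algebra_simps)
  finally have "(\<Sum>i=1..n. d i * g i) = 0" using eq by simp
  moreover have "\<forall>i\<in>{1..n}. d i \<in> Fq q"
    using d1(1) d2(1) c by (auto simp: d_def intro!: Fq_diff Fq_0)
  ultimately have "\<forall>i\<in>{1..n}. d i = 0" using li unfolding lin_indep_Fq_def by blast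
  then have "d (Suc j) = 0" using j by auto
  then show ?thesis by (simp add: d_def)
qed

lemma det_Lq_last_column:
  fixes A :: "'a poly mat"
  assumes A: "A \<in> carrier_mat n n" and n: "1 \<le> n"
    and const: "\<And>j l. j < n \<Longrightarrow> l < n - 1 \<Longrightarrow> degree (A $$ (j, l)) = 0"
    and last: "\<And>j. j < n \<Longrightarrow> A $$ (j, n - 1) = monom 1 (q ^ j)"
  shows "det A \<in> Lq q"
proof -
  have "(\<Prod>i = 0..<n. A $$ (i, p i)) \<in> Lq q" if p: "p permutes {0..<n}" for p
  proof -
    have "n - 1 \<in> p ` {0..<n}" using permutes_image[OF p] n by auto
    then obtain i0 where i0: "i0 < n" "p i0 = n - 1" by auto
    have "p i < n - 1" if "i < n" "i \<noteq> i0" for i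
    proof -
      have "p i < n" using permutes_in_image[OF p] that(1) by auto
      moreover have "p i \<noteq> p i0" using permutes_inj[OF p] that(2) by (meson injD)
      ultimately show ?thesis using i0(2) by linarith
    qed
    then have "degree (\<Prod>i\<in>{0..<n} - {i0}. A $$ (i, p i)) = 0"
      using degree_prod_sum_le[of "{0..<n} - {i0}" "\<lambda>i. A $$ (i, p i)"] const by simp
    moreover have "(\<Prod>i = 0..<n. A $$ (i, p i))
        = (\<Prod>i\<in>{0..<n} - {i0}. A $$ (i, p i)) * monom 1 (q ^ i0)"
      using i0 last by (subst prod.remove[of _ i0]) (auto simp: mult.commute)
    ultimately show ?thesis by (simp add: Lq_const_mult)
  qed
  moreover have "det A = (\<Sum>p | p permutes {0..<n}. of_int (sign p) * (\<Prod>i = 0..<n. A $$ (i, p i)))"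
    using A unfolding det_def by auto
  ultimately show ?thesis by (auto intro!: Lq_sum Lq_const_mult[OF degree_of_int])
qed

lemma Lambda_g_Lq:
  fixes g r :: "nat \<Rightarrow> 'a"
  assumes "1 \<le> n"
  shows "Lambda_g q n g r \<in> Lq q"
  unfolding Lambda_g_def
proof (intro Lq_sum Lq_smult)
  fix i assume i: "i \<in> {1..n}"
  show "det (D_g q n g i) \<in> Lq q"
  proof (rule det_Lq_last_column[OF _ assms])
    show "D_g q n g i \<in> carrier_mat n n" by (simp add: D_g_def)
    fix j assume j: "j < n"
    show "D_g q n g i $$ (j, n - 1) = monom 1 (q ^ j)"
      using i j assms by (simp add: D_g_def Let_def)
    fix l assume l: "l < n - 1"
    show "degree (D_g q n g i $$ (j, l)) = 0"
      using i j l assms by (simp add: D_g_def Let_def; arith)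
  qed
qed

text \<open>Right division by a monic linearized polynomial \<open>P\<close>: the leading term \<open>c x\<^sup>[\<^sup>t\<^sup>]\<close> of \<open>h\<close> is
  removed by subtracting \<open>(c x\<^sup>[\<^sup>t\<^sup>-\<^sup>n\<^sup>]) \<circ> P = c P\<^bsup>q^(t-n)\<^esup>\<close>.\<close>
lemma Lq_division:
  fixes P h :: "'a poly"
  assumes P: "P \<in> Lq q" "degree P = q ^ n" "lead_coeff P = 1" and h: "h \<in> Lq q"
  shows "\<exists>\<sigma> \<rho>. \<sigma> \<in> Lq q \<and> \<rho> \<in> Lq q \<and> degree \<rho> < q ^ n \<and> h = pcompose \<sigma> P + \<rho>"
  using h
proof (induction "degree h" arbitrary: h rule: less_induct)
  case less
  show ?case
  proof (cases "degree h < q ^ n")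
    case True
    then show ?thesis using less.prems by (intro exI[of _ 0] exI[of _ h]) auto
  next
    case False
    then have h0: "h \<noteq> 0" by (metis degree_0 qpow_pos)
    obtain t where t: "degree h = q ^ t" using degree_Lq[OF less.prems h0] .
    have tn: "n \<le> t" using False t by simp
    define s where "s = monom (lead_coeff h) (q ^ (t - n))"
    have "P \<noteq> 0" using P(3) by auto
    then have "degree (P ^ q ^ (t - n)) = q ^ (t - n) * q ^ n" using P(2) by (simp add: degree_power_eq)
    also have "\<dots> = q ^ t" using tn by (simp flip: power_add)
    finally have "degree (P ^ q ^ (t - n)) = q ^ t" .
    moreover have "lead_coeff (P ^ q ^ (t - n)) = 1" using P(3) by (simp add: lead_coeff_power)
    ultimately have sP: "degree (pcompose s P) = q ^ t" "coeff (pcompose s P) (q ^ t) = lead_coeff h"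
      using h0 by (simp_all add: s_def pcompose_monom)
    define h' where "h' = h - pcompose s P"
    have h'_Lq: "h' \<in> Lq q" unfolding h'_def s_def by (intro Lq_diff less.prems Lq_pcompose Lq_monom P(1))
    have "degree h' < degree h"
    proof (cases "h' = 0")
      case False
      have "degree h' \<le> q ^ t" unfolding h'_def using t sP by (intro degree_diff_le) auto
      moreover have "coeff h' (q ^ t) = 0" unfolding h'_def using t sP by simp
      ultimately have "degree h' < q ^ t" using False eq_zero_or_degree_less le_neq_implies_less by blast
      then show ?thesis using t by simp
    qed (use t q_ge_2 in simp)
    from less.hyps[OF this h'_Lq] obtain \<sigma> \<rho>
      where IH: "\<sigma> \<in> Lq q" "\<rho> \<in> Lq q" "degree \<rho> < q ^ n" "h' = pcompose \<sigma> P + \<rho>"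
      by blast
    have "h = h' + pcompose s P" by (simp add: h'_def)
    also have "\<dots> = pcompose (\<sigma> + s) P + \<rho>" by (simp add: IH(4) pcompose_add)
    finally show ?thesis using IH(1-3) s_def by (intro exI[of _ "\<sigma> + s"] exI[of _ \<rho>]) (simp add: Lq_add)
  qed
qed

end

definition subspace_poly :: "nat \<Rightarrow> nat \<Rightarrow> (nat \<Rightarrow> 'a::field) \<Rightarrow> 'a poly" where
  "subspace_poly q j g = (\<Prod>u\<in>Fq_span q j g. [:- u, 1:])"

lemma Pi_g_eq_subspace_poly: "Pi_g q n g = subspace_poly q n g"
  by (simp add: Pi_g_def subspace_poly_def)

lemma lead_coeff_Pi_g: "lead_coeff (Pi_g q n g) = 1"
  by (simp add: Pi_g_def lead_coeff_prod)

definition Lq_deg_less :: "nat \<Rightarrow> nat \<Rightarrow> 'a::field poly set" where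
  "Lq_deg_less q t = {f \<in> Lq q. degree f < q ^ t}"

locale q_linearized_finite = q_linearized q e ty for q e and ty :: "'a::{field,finite} itself" +
  fixes m :: nat
  assumes card_UNIV: "card (UNIV :: 'a set) = q ^ m" and m_pos: "1 \<le> m"
begin

text \<open>Multiplication by a nonzero \<open>x\<close> permutes the nonzero elements.\<close>
lemma power_card_UNIV: "(x :: 'a) ^ card (UNIV :: 'a set) = x"
proof (cases "x = 0")
  case False
  have "x * (\<Prod>y\<in>UNIV - {0}. x * y) = x * x ^ (card (UNIV :: 'a set) - 1) * \<Prod>(UNIV - {0})"
    by (simp add: prod.distrib mult_ac)
  also have "x * x ^ (card (UNIV :: 'a set) - 1) = x ^ card (UNIV :: 'a set)"
    using finite_UNIV_card_ge_0[where ?'a = 'a] by (simp flip: power_Suc)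
  also have "(\<Prod>y\<in>UNIV - {0}. x * y) = (\<Prod>y\<in>UNIV - {0}. y)"
    by (rule prod.reindex_bij_witness[of _ "\<lambda>y. y / x" "\<lambda>y. x * y"]) (use False in auto)
  finally show ?thesis by simp
qed (use finite_UNIV_card_ge_0[where ?'a = 'a] in auto)

text \<open>\<open>F\<^sub>q\<close> is the root set of \<open>T = x\<^sup>q - x\<close>, and \<open>T\<close> divides \<open>x\<^bsup>q^m\<^esup> - x\<close>, which vanishes on the whole
  field; a root count of the cofactor forces \<open>T\<close> to have \<open>q\<close> roots.\<close>
lemma card_Fq: "card (Fq q :: 'a set) = q"
proof -
  define T :: "'a poly" where "T = monom 1 q - monom 1 1"
  define H where "H = (\<Sum>i<m. T ^ (q ^ i - 1))"
  have TH: "T * H = monom 1 (q ^ m) - monom 1 1"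
    unfolding T_def H_def by (rule frobenius_telescope)
  have q_le: "q \<le> q ^ m" using m_pos q_ge_2 by (simp add: self_le_power)
  then have qm: "1 < q ^ m" using q_ge_2 by linarith
  have degT: "degree T = q" unfolding T_def using q_ge_2 by (intro degree_monom_diff) auto
  have degTH: "degree (T * H) = q ^ m" unfolding TH using qm by (intro degree_monom_diff) auto
  then have "T \<noteq> 0" "H \<noteq> 0" using qm q_ge_2 by auto
  then have degH: "degree H = q ^ m - q" using degTH degT by (simp add: degree_mult_eq)
  have "poly (T * H) x = 0" for x
    unfolding TH using power_card_UNIV[of x] card_UNIV by (simp add: poly_monom)
  then have "UNIV = {x. poly T x = 0} \<union> {x. poly H x = 0}" by auto
  then have "q ^ m \<le> card {x. poly T x = 0} + card {x. poly H x = 0}"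
    using card_UNIV card_Un_le[of "{x. poly T x = 0}" "{x. poly H x = 0}"] by simp
  moreover have "card {x. poly H x = 0} \<le> q ^ m - q"
    using card_poly_roots_bound[OF \<open>H \<noteq> 0\<close>] degH by simp
  moreover have "card {x. poly T x = 0} \<le> q"
    using card_poly_roots_bound[OF \<open>T \<noteq> 0\<close>] degT by simp
  moreover have "{x. poly T x = 0} = Fq q"
    by (auto simp: T_def poly_monom Fq_def)
  ultimately show ?thesis using q_le by simp
qed

lemma prod_Fq_linear:
  "(\<Prod>c\<in>Fq q. [:- (c * b), 1:]) = monom 1 q - monom ((b :: 'a) ^ (q - 1)) 1"
  (is "?L = ?R")
proof (cases "b = 0")
  case True
  then have "?L = [:0, 1:] ^ q" using card_Fq by simp
  then show ?thesis using True q_ge_2 by (simp add: monom_altdef power_0_left)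
next
  case False
  show ?thesis
  proof (rule poly_eqI_degree_lead_coeff[where n = q and A = "(\<lambda>c. c * b) ` Fq q"])
    have "degree ?L = q" by (subst degree_prod_sum_eq) (auto simp: card_Fq)
    moreover have "lead_coeff ?L = 1" by (simp add: lead_coeff_prod)
    moreover have "degree ?R = q" using q_ge_2 by (intro degree_monom_diff) auto
    ultimately show "coeff ?L q = coeff ?R q" "degree ?L \<le> q" "degree ?R \<le> q"
      using q_ge_2 by simp_all
    show "q \<le> card ((\<lambda>c. c * b) ` Fq q)"
      using False card_Fq by (subst card_image) (auto intro: inj_onI)
    fix z assume "z \<in> (\<lambda>c. c * b) ` Fq q"
    then obtain c where c: "c ^ q = c" "z = c * b" by (auto simp: Fq_def)
    have "b ^ (q - 1) * b = b ^ q" using q_ge_2 by (simp flip: power_Suc2)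
    then have "poly ?R z = 0" using c by (simp add: poly_monom algebra_simps)
    moreover have "poly ?L z = 0"
      using \<open>z \<in> _\<close> by (subst poly_prod, subst prod_zero_iff) auto
    ultimately show "poly ?L z = poly ?R z" by simp
  qed
qed

text \<open>The span at step \<open>j + 1\<close> is the disjoint union of the translates of the span at step \<open>j\<close>
  by \<open>c g\<^sub>j\<^sub>+\<^sub>1\<close>, \<open>c \<in> F\<^sub>q\<close>; as \<open>P = subspace_poly q j g\<close> is \<open>F\<^sub>q\<close>-linear, this gives
  \<open>\<Prod>\<^sub>c (P - c P(g\<^sub>j\<^sub>+\<^sub>1)) = (x\<^sup>q - P(g\<^sub>j\<^sub>+\<^sub>1)\<^bsup>q-1\<^esup> x) \<circ> P\<close>.\<close>
lemma subspace_poly_Suc: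
  fixes g :: "nat \<Rightarrow> 'a" and j :: nat
  defines "P \<equiv> subspace_poly q j g"
  assumes li: "lin_indep_Fq q n g" and j: "Suc j \<le> n" and P_Lq: "P \<in> Lq q"
  shows "subspace_poly q (Suc j) g = pcompose (monom 1 q - monom (poly P (g (Suc j)) ^ (q - 1)) 1) P"
proof -
  define a where "a = g (Suc j)"
  define b where "b = poly P a"
  have "subspace_poly q (Suc j) g = (\<Prod>c\<in>Fq q. \<Prod>u\<in>(\<lambda>u. u + c * a) ` Fq_span q j g. [:- u, 1:])"
    unfolding subspace_poly_def Fq_span_Suc a_def
    by (rule prod.UNION_disjoint)
      (use Fq_span_Suc_translates_disjoint[OF li j] in auto)
  also have "\<dots> = (\<Prod>c\<in>Fq q. pcompose P [:- (c * a), 1:])"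
  proof (intro prod.cong refl)
    fix c :: 'a
    have "(\<Prod>u\<in>(\<lambda>u. u + c * a) ` Fq_span q j g. [:- u, 1:])
        = (\<Prod>u\<in>Fq_span q j g. pcompose [:- u, 1:] [:- (c * a), 1:])"
      by (subst prod.reindex) (auto intro: inj_onI simp: pcompose_pCons)
    then show "(\<Prod>u\<in>(\<lambda>u. u + c * a) ` Fq_span q j g. [:- u, 1:]) = pcompose P [:- (c * a), 1:]"
      by (simp add: P_def subspace_poly_def pcompose_prod)
  qed
  also have "\<dots> = (\<Prod>c\<in>Fq q. pcompose [:- (c * b), 1:] P)"
  proof (intro prod.cong refl)
    fix c :: 'a assume c: "c \<in> Fq q"
    have "pcompose P [:- (c * a), 1:] = pcompose P [:0, 1:] + pcompose P [:- (c * a):]"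
      using pcompose_Lq_add[OF P_Lq, of "[:0, 1:]" "[:- (c * a):]"] by simp
    also have "\<dots> = P + [:- (c * b):]"
      using poly_Lq_Fq_mult[OF P_Lq Fq_uminus[OF c], of a] by (simp add: b_def pcompose_pCons_0)
    finally show "pcompose P [:- (c * a), 1:] = pcompose [:- (c * b), 1:] P"
      by (simp add: pcompose_pCons)
  qed
  also have "\<dots> = pcompose (monom 1 q - monom (b ^ (q - 1)) 1) P"
    by (simp add: prod_Fq_linear flip: pcompose_prod)
  finally show ?thesis by (simp add: b_def a_def)
qed

lemma subspace_poly_Lq_degree:
  fixes g :: "nat \<Rightarrow> 'a"
  assumes li: "lin_indep_Fq q n g" and "j \<le> n"
  shows "subspace_poly q j g \<in> Lq q \<and> degree (subspace_poly q j g) = q ^ j"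
  using \<open>j \<le> n\<close>
proof (induction j)
  case 0
  have "subspace_poly q 0 g = monom 1 (q ^ 0)" by (simp add: subspace_poly_def Fq_span_0 monom_altdef)
  then show ?case by (simp add: degree_monom_eq del: power_0)
next
  case (Suc j)
  define T where "T = monom 1 q - monom (poly (subspace_poly q j g) (g (Suc j)) ^ (q - 1)) 1"
  have IH: "subspace_poly q j g \<in> Lq q" "degree (subspace_poly q j g) = q ^ j"
    using Suc by auto
  have "T \<in> Lq q" unfolding T_def using Lq_monom[of 1 q 1] Lq_monom[of _ q 0] by (intro Lq_diff) auto
  moreover have "degree T = q" unfolding T_def using q_ge_2 by (intro degree_monom_diff) auto
  ultimately show ?case
    unfolding subspace_poly_Suc[OF li Suc.prems IH(1), folded T_def]
    using Lq_pcompose[OF _ IH(1)] IH(2) by (simp add: degree_pcompose)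
qed

lemma bij_betw_Lq_deg_less_coeffs:
  "bij_betw (\<lambda>f. restrict (\<lambda>j. coeff f (q ^ j)) {..<t}) (Lq_deg_less q t) ({..<t} \<rightarrow>\<^sub>E (UNIV :: 'a set))"
proof (rule bij_betw_imageI)
  show "inj_on (\<lambda>f. restrict (\<lambda>j. coeff f (q ^ j)) {..<t}) (Lq_deg_less q t :: 'a poly set)"
  proof (rule inj_onI)
    fix f f' :: "'a poly" assume f: "f \<in> Lq_deg_less q t" and f': "f' \<in> Lq_deg_less q t"
      and eq: "restrict (\<lambda>j. coeff f (q ^ j)) {..<t} = restrict (\<lambda>j. coeff f' (q ^ j)) {..<t}"
    have "f = (\<Sum>j<t. monom (coeff f (q ^ j)) (q ^ j))"
      using f by (intro Lq_eq_sum_monom) (auto simp: Lq_deg_less_def)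
    also have "\<dots> = (\<Sum>j<t. monom (coeff f' (q ^ j)) (q ^ j))"
    proof (intro sum.cong refl)
      fix j assume "j \<in> {..<t}"
      then show "monom (coeff f (q ^ j)) (q ^ j) = monom (coeff f' (q ^ j)) (q ^ j)"
        using fun_cong[OF eq, of j] by simp
    qed
    also have "\<dots> = f'"
      using f' by (intro Lq_eq_sum_monom[symmetric]) (auto simp: Lq_deg_less_def)
    finally show "f = f'" .
  qed
  show "(\<lambda>f. restrict (\<lambda>j. coeff f (q ^ j)) {..<t}) ` Lq_deg_less q t = {..<t} \<rightarrow>\<^sub>E (UNIV :: 'a set)"
  proof
    show "{..<t} \<rightarrow>\<^sub>E (UNIV :: 'a set) \<subseteq> (\<lambda>f. restrict (\<lambda>j. coeff f (q ^ j)) {..<t}) ` Lq_deg_less q t"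
    proof
      fix c :: "nat \<Rightarrow> 'a" assume c: "c \<in> {..<t} \<rightarrow>\<^sub>E UNIV"
      define f where "f = (\<Sum>j<t. monom (c j) (q ^ j))"
      have "coeff f i = 0" if "q ^ t \<le> i" for i
        using that by (auto simp: f_def coeff_sum intro!: sum.neutral dest: leD)
      then have "degree f \<le> q ^ t - 1" by (intro degree_le) auto
      then have "degree f < q ^ t" using qpow_pos[of t] by linarith
      then have "f \<in> Lq_deg_less q t" by (simp add: Lq_deg_less_def f_def Lq_sum)
      moreover have "restrict (\<lambda>j. coeff f (q ^ j)) {..<t} = c"
        using c by (auto simp: f_def coeff_sum PiE_def extensional_def)
      ultimately show "c \<in> (\<lambda>f. restrict (\<lambda>j. coeff f (q ^ j)) {..<t}) ` Lq_deg_less q t" by force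
    qed
  qed (rule image_subsetI, simp)
qed

lemma finite_Lq_deg_less: "finite (Lq_deg_less q t :: 'a poly set)"
  using bij_betw_finite[OF bij_betw_Lq_deg_less_coeffs] by (simp add: finite_PiE)

lemma card_Lq_deg_less: "card (Lq_deg_less q t :: 'a poly set) = card (UNIV :: 'a set) ^ t"
  using bij_betw_same_card[OF bij_betw_Lq_deg_less_coeffs] by (simp add: card_PiE)

end

section \<open>Leading monomials\<close>

lemma mono_less_same_pos: "mono_less k (a, j) (b, j) \<longleftrightarrow> a < b"
  by (auto simp: mono_less_def)

text \<open>On monomials the term-over-position order is the order of the following natural number keys.\<close>
definition mono_key :: "nat \<Rightarrow> nat \<times> nat \<Rightarrow> nat" where
  "mono_key k x = 2 * (fst x + wt k (snd x)) + (snd x - 1)"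

lemma mono_less_iff_key_less:
  "snd x \<in> {1, 2} \<Longrightarrow> snd y \<in> {1, 2} \<Longrightarrow> mono_less k x y \<longleftrightarrow> mono_key k x < mono_key k y"
  by (cases x, cases y) (auto simp: mono_less_def mono_key_def wt_def)

lemma mono_key_inject:
  "snd x \<in> {1, 2} \<Longrightarrow> snd y \<in> {1, 2} \<Longrightarrow> mono_key k x = mono_key k y \<longleftrightarrow> x = y"
  by (cases x, cases y) (auto simp: mono_key_def wt_def; presburger)

lemma lm_greatest:
  assumes fin: "finite (vsupp q v)" and ne: "vsupp q v \<noteq> {}"
  shows "lm q k v \<in> vsupp q v"
    and "x \<in> vsupp q v \<Longrightarrow> x \<noteq> lm q k v \<Longrightarrow> mono_less k x (lm q k v)"
proof -
  let ?S = "vsupp q v"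
  have pos: "snd x \<in> {1, 2}" if "x \<in> ?S" for x using that by (auto simp: vsupp_def)
  have "Max (mono_key k ` ?S) \<in> mono_key k ` ?S" using fin ne by (intro Max_in) auto
  then obtain x0 where x0: "x0 \<in> ?S" "mono_key k x0 = Max (mono_key k ` ?S)" by auto
  have greatest: "mono_less k x x0" if "x \<in> ?S" "x \<noteq> x0" for x
  proof -
    have "mono_key k x \<le> mono_key k x0" using x0(2) fin that(1) by simp
    moreover have "mono_key k x \<noteq> mono_key k x0" using mono_key_inject pos that x0(1) by blast
    ultimately show ?thesis using mono_less_iff_key_less pos that(1) x0(1) by simp
  qed
  have "lm q k v = x0" unfolding lm_def
  proof (rule the_equality)
    show "x0 \<in> ?S \<and> (\<forall>x\<in>?S. x \<noteq> x0 \<longrightarrow> mono_less k x x0)" using x0(1) greatest by blast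
    fix x assume x: "x \<in> ?S \<and> (\<forall>x'\<in>?S. x' \<noteq> x \<longrightarrow> mono_less k x' x)"
    show "x = x0"
    proof (rule ccontr)
      assume "x \<noteq> x0"
      then have "mono_less k x0 x" "mono_less k x x0" using x x0(1) greatest by auto
      then show False using mono_less_iff_key_less pos x x0(1) by (meson less_asym)
    qed
  qed
  then show "lm q k v \<in> ?S" "x \<in> ?S \<Longrightarrow> x \<noteq> lm q k v \<Longrightarrow> mono_less k x (lm q k v)"
    using x0(1) greatest by auto
qed

context q_linearized
begin

lemma finite_vsupp: "finite (vsupp q v)"
proof (rule finite_subset)
  show "vsupp q v \<subseteq> {i. qcoeff q (fst v) i \<noteq> 0} \<times> {1} \<union> {i. qcoeff q (snd v) i \<noteq> 0} \<times> {2}"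
    by (auto simp: vsupp_def vcomp_j_def split: if_splits)
qed (simp add: finite_qcoeff_nonzero)

lemma qdeg_in_vsupp:
  "j \<in> {1, 2} \<Longrightarrow> vcomp_j j v \<in> Lq q \<Longrightarrow> vcomp_j j v \<noteq> 0 \<Longrightarrow> (qdeg q (vcomp_j j v), j) \<in> vsupp q v"
  by (simp add: vsupp_def qcoeff_qdeg_nonzero)

lemma lm_eq_qdeg:
  assumes Lq: "fst v \<in> Lq q" "snd v \<in> Lq q" and "v \<noteq> 0"
  shows "vcomp_j (lpos q k v) v \<noteq> 0" "lm q k v = (qdeg q (vcomp_j (lpos q k v) v), lpos q k v)"
proof -
  have comp_Lq: "vcomp_j j v \<in> Lq q" for j using Lq by (simp add: vcomp_j_def)
  have "fst v \<noteq> 0 \<or> snd v \<noteq> 0" using \<open>v \<noteq> 0\<close> by (simp add: prod_eq_iff)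
  then have "vcomp_j 1 v \<noteq> 0 \<or> vcomp_j 2 v \<noteq> 0" by (simp add: vcomp_j_def)
  then have ne: "vsupp q v \<noteq> {}" using qdeg_in_vsupp[of 1 v] qdeg_in_vsupp[of 2 v] comp_Lq by auto
  obtain i j where ij: "lm q k v = (i, j)" by fastforce
  then have in_supp: "(i, j) \<in> vsupp q v" using lm_greatest(1)[OF finite_vsupp ne, of k] by simp
  then have j: "j \<in> {1, 2}" and nz: "vcomp_j j v \<noteq> 0" by (auto simp: vsupp_def qcoeff_def)
  have "i \<le> qdeg q (vcomp_j j v)" using in_supp by (simp add: vsupp_def qcoeff_le_qdeg)
  moreover have "qdeg q (vcomp_j j v) \<le> i"
  proof (rule ccontr)
    assume less: "\<not> qdeg q (vcomp_j j v) \<le> i"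
    then have "mono_less k (qdeg q (vcomp_j j v), j) (i, j)"
      using lm_greatest(2)[OF finite_vsupp ne qdeg_in_vsupp[OF j comp_Lq nz], of k] ij by auto
    then show False using less by (simp add: mono_less_same_pos)
  qed
  ultimately have "qdeg q (vcomp_j j v) = i" by simp
  then show "vcomp_j (lpos q k v) v \<noteq> 0" "lm q k v = (qdeg q (vcomp_j (lpos q k v) v), lpos q k v)"
    using ij nz by (simp_all add: lpos_def)
qed

lemma lm_dominates:
  assumes Lq: "fst v \<in> Lq q" "snd v \<in> Lq q" and "v \<noteq> 0"
    and j: "j \<in> {1, 2}" "j \<noteq> lpos q k v" and nz: "vcomp_j j v \<noteq> 0"
  shows "mono_less k (qdeg q (vcomp_j j v), j) (lm q k v)"
proof -
  have "(qdeg q (vcomp_j j v), j) \<in> vsupp q v"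
    using qdeg_in_vsupp[OF j(1) _ nz] Lq by (simp add: vcomp_j_def)
  moreover have "(qdeg q (vcomp_j j v), j) \<noteq> lm q k v" using j(2) by (simp add: lpos_def prod_eq_iff)
  ultimately show ?thesis using lm_greatest(2)[OF finite_vsupp] by blast
qed

lemma lpos_1_degrees:
  assumes Lq: "fst v \<in> Lq q" "snd v \<in> Lq q" and "v \<noteq> 0" and lp: "lpos q k v = 1"
  shows "fst v \<noteq> 0" "degree (snd v) * q ^ (k - 1) < degree (fst v)"
    "wqdeg q k v = qdeg q (fst v)"
proof -
  show fst: "fst v \<noteq> 0" using lm_eq_qdeg(1)[OF assms(1-3), of k] lp by (simp add: vcomp_j_def)
  have lm: "lm q k v = (qdeg q (fst v), 1)"
    using lm_eq_qdeg(2)[OF assms(1-3), of k] lp by (simp add: vcomp_j_def)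
  have snd_less: "qdeg q (snd v) + (k - 1) < qdeg q (fst v)" if "snd v \<noteq> 0"
    using lm_dominates[OF assms(1-3), where j = 2 and k = k] that lp lm by (simp add: vcomp_j_def mono_less_def wt_def)
  show "wqdeg q k v = qdeg q (fst v)" using fst snd_less by (simp add: wqdeg_def)
  show "degree (snd v) * q ^ (k - 1) < degree (fst v)"
  proof (cases "snd v = 0")
    case True then show ?thesis using degree_Lq_pos[OF Lq(1) fst] by simp
  next
    case False
    then have "degree (snd v) * q ^ (k - 1) = q ^ (qdeg q (snd v) + (k - 1))"
      using degree_Lq_eq_qdeg[OF Lq(2)] by (simp add: power_add)
    then show ?thesis using snd_less[OF False] degree_Lq_eq_qdeg[OF Lq(1) fst] by simp
  qed
qed

lemma lpos_2_degrees:
  assumes Lq: "fst v \<in> Lq q" "snd v \<in> Lq q" and "v \<noteq> 0" and lp: "lpos q k v = 2"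
  shows "snd v \<noteq> 0" "degree (fst v) \<le> degree (snd v) * q ^ (k - 1)"
    "wqdeg q k v = qdeg q (snd v) + (k - 1)"
proof -
  show snd: "snd v \<noteq> 0" using lm_eq_qdeg(1)[OF assms(1-3), of k] lp by (simp add: vcomp_j_def)
  have lm: "lm q k v = (qdeg q (snd v), 2)"
    using lm_eq_qdeg(2)[OF assms(1-3), of k] lp by (simp add: vcomp_j_def)
  have fst_le: "qdeg q (fst v) \<le> qdeg q (snd v) + (k - 1)" if "fst v \<noteq> 0"
    using lm_dominates[OF assms(1-3), where j = 1 and k = k] that lp lm by (auto simp: vcomp_j_def mono_less_def wt_def)
  show "wqdeg q k v = qdeg q (snd v) + (k - 1)" using snd fst_le by (simp add: wqdeg_def)
  show "degree (fst v) \<le> degree (snd v) * q ^ (k - 1)"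
  proof (cases "fst v = 0")
    case False
    then have "degree (fst v) = q ^ qdeg q (fst v)" using degree_Lq_eq_qdeg[OF Lq(1)] by simp
    moreover have "degree (snd v) * q ^ (k - 1) = q ^ (qdeg q (snd v) + (k - 1))"
      using degree_Lq_eq_qdeg[OF Lq(2) snd] by (simp add: power_add)
    ultimately show ?thesis using fst_le[OF False] by simp
  qed simp
qed

end

section \<open>Counting vectors of bounded weighted degree\<close>

text \<open>Predictable degree property of a pair \<open>[f\<^sub>1 f\<^sub>2]\<close>, \<open>[h\<^sub>1 h\<^sub>2]\<close> whose leading terms lie in
  different positions, with weights expressed through ordinary degrees (\<open>K = q\<^bsup>k-1\<^esup>\<close>).\<close>
lemma degree_pcompose_pair_max:
  fixes a c f1 f2 h1 h2 :: "'a::field poly"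
  assumes f: "degree f2 * K < degree f1" and h: "degree h1 \<le> degree h2 * K"
  shows "max (degree (pcompose a f1 + pcompose c h1)) (degree (pcompose a f2 + pcompose c h2) * K)
       = max (degree a * degree f1) (degree c * (degree h2 * K))"
    (is "max ?X ?Y = max ?A ?C")
proof (rule antisym)
  have af1: "degree (pcompose a f1) = ?A" by (simp add: degree_pcompose)
  have ch2: "degree (pcompose c h2) * K = ?C" by (simp add: degree_pcompose mult.assoc)
  have ch1: "degree (pcompose c h1) \<le> ?C" using h by (simp add: degree_pcompose mult_le_mono2)
  have af2: "degree (pcompose a f2) * K \<le> ?A"
    using f by (simp add: degree_pcompose mult.assoc mult_le_mono2 less_imp_le_nat)
  have "?X \<le> max ?A ?C"
    using degree_add_le_max[of "pcompose a f1" "pcompose c h1"] af1 ch1 by linarith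
  moreover have "?Y \<le> max (degree (pcompose a f2)) (degree (pcompose c h2)) * K"
    using degree_add_le_max by (intro mult_le_mono1)
  then have "?Y \<le> max ?A ?C" using af2 ch2 by (simp add: nat_mult_max_left)
  ultimately show "max ?X ?Y \<le> max ?A ?C" by simp
  show "max ?A ?C \<le> max ?X ?Y"
  proof (cases "?C < ?A")
    case True
    then have "?X = ?A" using af1 ch1 by (simp add: degree_add_eq_left)
    then show ?thesis using True by simp
  next
    case False
    have "?C \<le> ?Y"
    proof (cases "?C = 0")
      case False
      then have "0 < K" by auto
      have "degree (pcompose a f2) * K < ?C"
      proof (cases "degree a = 0")
        case False
        then have "degree a * (degree f2 * K) < ?A" using f by simp
        moreover have "degree (pcompose a f2) * K = degree a * (degree f2 * K)"
          by (simp add: degree_pcompose mult.assoc)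
        ultimately show ?thesis using \<open>\<not> ?C < ?A\<close> by linarith
      qed (use \<open>?C \<noteq> 0\<close> in \<open>simp add: degree_pcompose\<close>)
      then have "degree (pcompose a f2) < degree (pcompose c h2)" using ch2 by simp
      then have "degree (pcompose a f2 + pcompose c h2) = degree (pcompose c h2)"
        by (rule degree_add_eq_right)
      then have "?Y = ?C" using ch2 by (simp only:)
      then show ?thesis by (rule eq_imp_le[OF sym])
    qed (metis le0)
    moreover have "max ?A ?C = ?C" using False by (intro max.absorb2) linarith
    ultimately show ?thesis by (metis max.coboundedI2)
  qed
qed

text \<open>Stated with ordinary degrees, so that it includes the zero vector: for vectors of
  linearized polynomials it is the set of vectors of weighted \<open>q\<close>-degree below \<open>N\<close>.\<close>
definition wqdeg_less :: "nat \<Rightarrow> nat \<Rightarrow> nat \<Rightarrow> 'a::field lvec set" where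
  "wqdeg_less q k N = {v. max (degree (fst v)) (degree (snd v) * q ^ (k - 1)) < q ^ N}"

lemma vcomp_0 [simp]: "vcomp 0 v = 0"
  by (simp add: vcomp_def zero_prod_def)

lemma vcomp_X [simp]: "vcomp [:0, 1:] v = v"
  by (simp add: vcomp_def pcompose_pCons)

lemma vcomp_diff: "vcomp (a - a') v = vcomp a v - vcomp a' v"
  by (simp add: vcomp_def pcompose_diff)

context q_linearized
begin

lemma mult_qpow_less_iff: "d \<le> N \<Longrightarrow> x * q ^ d < q ^ N \<longleftrightarrow> x < q ^ (N - d)"
  by (metis le_add_diff_inverse2 mult_less_cancel2 power_add qpow_pos)

lemma degree_pcompose_add_less_iff:
  assumes P: "degree P = q ^ n" and \<delta>: "\<delta> \<in> Lq q" and \<rho>: "degree \<rho> < q ^ n" and N: "n \<le> N"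
  shows "degree (pcompose \<delta> P + \<rho>) < q ^ N \<longleftrightarrow> degree \<delta> < q ^ (N - n)"
proof (cases "\<delta> = 0")
  case True
  then show ?thesis using \<rho> N q_ge_2 by (simp add: less_le_trans)
next
  case False
  have \<delta>P: "degree (pcompose \<delta> P) = degree \<delta> * q ^ n" using P by (simp add: degree_pcompose)
  have "q ^ n \<le> degree \<delta> * q ^ n" using degree_Lq_pos[OF \<delta> False] by simp
  then have "degree \<rho> < degree (pcompose \<delta> P)" using \<rho> \<delta>P by linarith
  then have "degree (pcompose \<delta> P + \<rho>) = degree \<delta> * q ^ n" using \<delta>P by (simp add: degree_add_eq_left)
  then show ?thesis using mult_qpow_less_iff[OF N] by simp
qed

end

context q_linearized_finite
begin

text \<open>Writing \<open>h = \<sigma> \<circ> P + \<rho>\<close>, the \<open>\<beta>\<close> in question are exactly the \<open>\<delta> - \<sigma>\<close> with \<open>q\<close>-degree of \<open>\<delta>\<close>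
  below \<open>N - n\<close>.\<close>
lemma card_pcompose_add_deg_less:
  fixes P h :: "'a poly"
  assumes P: "P \<in> Lq q" "degree P = q ^ n" "lead_coeff P = 1" and h: "h \<in> Lq q" and N: "n \<le> N"
  shows "finite {\<beta> \<in> Lq q. degree (pcompose \<beta> P + h) < q ^ N}"
    and "card {\<beta> \<in> Lq q. degree (pcompose \<beta> P + h) < q ^ N} = card (UNIV :: 'a set) ^ (N - n)"
proof -
  obtain \<sigma> \<rho> where \<sigma>: "\<sigma> \<in> Lq q" and \<rho>: "degree \<rho> < q ^ n" and h_eq: "h = pcompose \<sigma> P + \<rho>"
    using Lq_division[OF P h] by blast
  have "{\<beta> \<in> Lq q. degree (pcompose \<beta> P + h) < q ^ N} \<subseteq> (\<lambda>\<delta>. \<delta> - \<sigma>) ` Lq_deg_less q (N - n)"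
  proof
    fix \<beta> assume "\<beta> \<in> {\<beta> \<in> Lq q. degree (pcompose \<beta> P + h) < q ^ N}"
    then have "\<beta> + \<sigma> \<in> Lq_deg_less q (N - n)"
      using degree_pcompose_add_less_iff[OF P(2) Lq_add[OF _ \<sigma>] \<rho> N, of \<beta>] h_eq
      by (simp add: Lq_deg_less_def Lq_add \<sigma> pcompose_add add.assoc)
    then show "\<beta> \<in> (\<lambda>\<delta>. \<delta> - \<sigma>) ` Lq_deg_less q (N - n)" by (auto intro: image_eqI[of _ _ "\<beta> + \<sigma>"])
  qed
  moreover have "(\<lambda>\<delta>. \<delta> - \<sigma>) ` Lq_deg_less q (N - n) \<subseteq> {\<beta> \<in> Lq q. degree (pcompose \<beta> P + h) < q ^ N}"
  proof
    fix \<beta> assume "\<beta> \<in> (\<lambda>\<delta>. \<delta> - \<sigma>) ` Lq_deg_less q (N - n)"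
    then obtain \<delta> where \<delta>: "\<delta> \<in> Lq q" "degree \<delta> < q ^ (N - n)" and \<beta>: "\<beta> = \<delta> - \<sigma>"
      by (auto simp: Lq_deg_less_def)
    have "\<beta> \<in> Lq q" using \<beta> \<delta>(1) \<sigma> by (simp add: Lq_diff)
    moreover have "pcompose \<beta> P + h = pcompose \<delta> P + \<rho>" using \<beta> h_eq by (simp add: pcompose_diff)
    moreover have "degree (pcompose \<delta> P + \<rho>) < q ^ N"
      using degree_pcompose_add_less_iff[OF P(2) \<delta>(1) \<rho> N] \<delta>(2) by simp
    ultimately show "\<beta> \<in> {\<beta> \<in> Lq q. degree (pcompose \<beta> P + h) < q ^ N}" by simp
  qed
  ultimately have "{\<beta> \<in> Lq q. degree (pcompose \<beta> P + h) < q ^ N} = (\<lambda>\<delta>. \<delta> - \<sigma>) ` Lq_deg_less q (N - n)"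
    by (rule equalityI)
  moreover have "inj_on (\<lambda>\<delta>. \<delta> - \<sigma>) (Lq_deg_less q (N - n))" by (rule inj_onI) simp
  ultimately show "finite {\<beta> \<in> Lq q. degree (pcompose \<beta> P + h) < q ^ N}"
    and "card {\<beta> \<in> Lq q. degree (pcompose \<beta> P + h) < q ^ N} = card (UNIV :: 'a set) ^ (N - n)"
    by (simp_all add: finite_Lq_deg_less card_image card_Lq_deg_less)
qed

end

section \<open>The interpolation module\<close>

locale interpolation_module = q_linearized_finite q e ty m
  for q e and ty :: "'a::{field,finite} itself" and m +
  fixes n :: nat and g r :: "nat \<Rightarrow> 'a"
  assumes lin_indep: "lin_indep_Fq q n g" and n_pos: "1 \<le> n"
begin

lemma Pi_g_Lq: "Pi_g q n g \<in> Lq q" and degree_Pi_g: "degree (Pi_g q n g) = q ^ n"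
  using subspace_poly_Lq_degree[OF lin_indep order_refl] by (simp_all add: Pi_g_eq_subspace_poly)

lemma neg_Lambda_g_Lq: "- Lambda_g q n g r \<in> Lq q"
  using Lambda_g_Lq[OF n_pos] by (rule Lq_uminus)

definition gen_comb :: "'a poly \<Rightarrow> 'a poly \<Rightarrow> 'a lvec" where
  "gen_comb \<beta> \<gamma> = (pcompose \<beta> (Pi_g q n g) + pcompose \<gamma> (- Lambda_g q n g r), \<gamma>)"

lemma Mmod_eq: "Mmod q n g r = {gen_comb \<beta> \<gamma> | \<beta> \<gamma>. \<beta> \<in> Lq q \<and> \<gamma> \<in> Lq q}"
proof -
  have eq: "vcomp \<beta> (Pi_g q n g, 0) + vcomp \<gamma> (- Lambda_g q n g r, monom 1 1) = gen_comb \<beta> \<gamma>"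
    if "\<beta> \<in> Lq q" for \<beta> \<gamma>
    using Lq_coeff_0[OF that] by (simp add: vcomp_def gen_comb_def pcompose_0' monom_altdef)
  show ?thesis unfolding Mmod_def
  proof (intro Collect_cong HOL.iffI; elim exE conjE)
    fix x \<beta> \<gamma> assume "x = vcomp \<beta> (Pi_g q n g, 0) + vcomp \<gamma> (- Lambda_g q n g r, monom 1 1)"
      and "\<beta> \<in> Lq q" "\<gamma> \<in> Lq q"
    then show "\<exists>\<beta> \<gamma>. x = gen_comb \<beta> \<gamma> \<and> \<beta> \<in> Lq q \<and> \<gamma> \<in> Lq q" using eq by blast
  next
    fix x \<beta> \<gamma> assume "x = gen_comb \<beta> \<gamma>" and "\<beta> \<in> Lq q" "\<gamma> \<in> Lq q"
    then show "\<exists>\<beta> \<gamma>. x = vcomp \<beta> (Pi_g q n g, 0) + vcomp \<gamma> (- Lambda_g q n g r, monom 1 1)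
        \<and> \<beta> \<in> Lq q \<and> \<gamma> \<in> Lq q"
      using eq by metis
  qed
qed

lemma Mmod_Lq: "v \<in> Mmod q n g r \<Longrightarrow> fst v \<in> Lq q \<and> snd v \<in> Lq q"
  unfolding Mmod_eq gen_comb_def using Pi_g_Lq neg_Lambda_g_Lq by (auto intro!: Lq_add Lq_pcompose)

lemma Mmod_vcomp_add:
  assumes "v \<in> Mmod q n g r" "w \<in> Mmod q n g r" "a \<in> Lq q" "c \<in> Lq q"
  shows "vcomp a v + vcomp c w \<in> Mmod q n g r"
proof -
  obtain \<beta> \<gamma> \<beta>' \<gamma>' where Lq: "\<beta> \<in> Lq q" "\<gamma> \<in> Lq q" "\<beta>' \<in> Lq q" "\<gamma>' \<in> Lq q"
    and vw: "v = gen_comb \<beta> \<gamma>" "w = gen_comb \<beta>' \<gamma>'"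
    using assms(1,2) unfolding Mmod_eq by blast
  have "vcomp a v + vcomp c w
      = gen_comb (pcompose a \<beta> + pcompose c \<beta>') (pcompose a \<gamma> + pcompose c \<gamma>')"
    using assms(3,4) by (simp add: vw vcomp_def gen_comb_def pcompose_Lq_add pcompose_assoc
        pcompose_add)
  moreover have "pcompose a \<beta> + pcompose c \<beta>' \<in> Lq q" "pcompose a \<gamma> + pcompose c \<gamma>' \<in> Lq q"
    using Lq assms(3,4) by (auto intro: Lq_add Lq_pcompose)
  ultimately show ?thesis unfolding Mmod_eq by blast
qed

lemma gen_comb_inject:
  assumes "\<beta> \<in> Lq q" "\<beta>' \<in> Lq q" "gen_comb \<beta> \<gamma> = gen_comb \<beta>' \<gamma>'"
  shows "\<beta> = \<beta>' \<and> \<gamma> = \<gamma>'"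
proof -
  have \<gamma>: "\<gamma> = \<gamma>'" using assms(3) by (simp add: gen_comb_def)
  then have "pcompose (\<beta> - \<beta>') (Pi_g q n g) = 0" using assms(3) by (simp add: gen_comb_def pcompose_diff)
  moreover have "\<beta> - \<beta>' = 0"
  proof (rule ccontr)
    assume "\<beta> - \<beta>' \<noteq> 0"
    then have "1 \<le> degree (\<beta> - \<beta>')" using degree_Lq_pos[OF Lq_diff[OF assms(1,2)]] by blast
    then have "1 \<le> degree (pcompose (\<beta> - \<beta>') (Pi_g q n g))"
      using degree_Pi_g qpow_pos[of n] by (simp add: degree_pcompose Suc_le_eq)
    then show False using calculation by simp
  qed
  then show ?thesis using \<gamma> by simp
qed

text \<open>Counting through the generators: \<open>\<gamma>\<close> is free below \<open>q\<close>-degree \<open>N - (k - 1)\<close>, and for each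
  \<open>\<gamma>\<close> the admissible \<open>\<beta>\<close> are counted by division by \<open>\<Pi>\<close>.\<close>
lemma card_Mmod_wqdeg_less:
  assumes N: "n + k \<le> N"
  shows "card (Mmod q n g r \<inter> wqdeg_less q k N)
    = card (UNIV :: 'a set) ^ (N - (k - 1)) * card (UNIV :: 'a set) ^ (N - n)"
proof -
  define Fib where "Fib \<gamma> = {\<beta> \<in> Lq q. degree (pcompose \<beta> (Pi_g q n g) + pcompose \<gamma> (- Lambda_g q n g r)) < q ^ N}"
    for \<gamma>
  let ?D = "SIGMA \<gamma>:Lq_deg_less q (N - (k - 1)). Fib \<gamma>"
  have Fib: "finite (Fib \<gamma>)" "card (Fib \<gamma>) = card (UNIV :: 'a set) ^ (N - n)" if "\<gamma> \<in> Lq q" for \<gamma>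
    using card_pcompose_add_deg_less[OF Pi_g_Lq degree_Pi_g lead_coeff_Pi_g
        Lq_pcompose[OF that neg_Lambda_g_Lq]] N unfolding Fib_def by simp_all
  have gen_comb_wqdeg_less: "gen_comb \<beta> \<gamma> \<in> wqdeg_less q k N \<longleftrightarrow> \<gamma> \<in> Lq_deg_less q (N - (k - 1)) \<and> \<beta> \<in> Fib \<gamma>"
    if "\<beta> \<in> Lq q" "\<gamma> \<in> Lq q" for \<beta> \<gamma>
    using that mult_qpow_less_iff[of "k - 1" N "degree \<gamma>"] N
    by (auto simp: gen_comb_def wqdeg_less_def Lq_deg_less_def Fib_def)
  have "Mmod q n g r \<inter> wqdeg_less q k N = (\<lambda>(\<gamma>, \<beta>). gen_comb \<beta> \<gamma>) ` ?D"
    unfolding Mmod_eq using gen_comb_wqdeg_less by (auto simp: Lq_deg_less_def Fib_def)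
  moreover have "inj_on (\<lambda>(\<gamma>, \<beta>). gen_comb \<beta> \<gamma>) ?D"
    using gen_comb_inject by (auto intro!: inj_onI simp: Fib_def)
  ultimately have "card (Mmod q n g r \<inter> wqdeg_less q k N) = (\<Sum>\<gamma>\<in>Lq_deg_less q (N - (k - 1)). card (Fib \<gamma>))"
    using Fib(1) finite_Lq_deg_less by (simp add: card_image Lq_deg_less_def)
  also have "\<dots> = card (Lq_deg_less q (N - (k - 1)) :: 'a poly set) * card (UNIV :: 'a set) ^ (N - n)"
    using Fib(2) by (simp add: Lq_deg_less_def)
  finally show ?thesis by (simp add: card_Lq_deg_less)
qed

end

locale interpolation_basis = interpolation_module q e ty m n g r
  for q e and ty :: "'a::{field,finite} itself" and m n g r +
  fixes k :: nat and b1 b2 :: "'a lvec"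
  assumes basis: "is_basis q (Mmod q n g r) {b1, b2}"
    and lpos_b1: "lpos q k b1 = 1" and lpos_b2: "lpos q k b2 = 2"
begin

lemma b1_ne_b2: "b1 \<noteq> b2"
  using lpos_b1 lpos_b2 by auto

lemma basis_Mmod: "b1 \<in> Mmod q n g r" "b2 \<in> Mmod q n g r"
  using basis by (auto simp: is_basis_def)

lemma basis_Lq: "fst b1 \<in> Lq q" "snd b1 \<in> Lq q" "fst b2 \<in> Lq q" "snd b2 \<in> Lq q"
  using Mmod_Lq[OF basis_Mmod(1)] Mmod_Lq[OF basis_Mmod(2)] by auto

lemma Mmod_basis_comb:
  assumes "v \<in> Mmod q n g r"
  obtains a c where "a \<in> Lq q" "c \<in> Lq q" "v = vcomp a b1 + vcomp c b2"
proof -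
  obtain A where "\<forall>b\<in>{b1, b2}. A b \<in> Lq q" "v = (\<Sum>b\<in>{b1, b2}. vcomp (A b) b)"
    using basis assms unfolding is_basis_def by blast
  then show thesis using that[of "A b1" "A b2"] b1_ne_b2 by simp
qed

lemma basis_comb_inject:
  assumes "a \<in> Lq q" "c \<in> Lq q" "a' \<in> Lq q" "c' \<in> Lq q"
    and "vcomp a b1 + vcomp c b2 = vcomp a' b1 + vcomp c' b2"
  shows "a = a' \<and> c = c'"
proof -
  define A where "A b = (if b = b1 then a - a' else c - c')" for b
  have "(\<Sum>b\<in>{b1, b2}. vcomp (A b) b) = 0"
    using assms(5) b1_ne_b2 by (simp add: A_def vcomp_diff algebra_simps)
  moreover have "\<forall>b\<in>{b1, b2}. A b \<in> Lq q" using assms(1-4) by (auto simp: A_def Lq_diff)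
  ultimately have "\<forall>b\<in>{b1, b2}. A b = 0" using basis unfolding is_basis_def by blast
  then show ?thesis using b1_ne_b2 by (auto simp: A_def)
qed

lemma basis_nonzero: "b1 \<noteq> 0" "b2 \<noteq> 0"
  using basis_comb_inject[of "[:0, 1:]" 0 0 0] basis_comb_inject[of 0 "[:0, 1:]" 0 0]
    Lq_monom[of 1 q 0] by (auto simp: monom_altdef)

lemma wqdeg_b1: "wqdeg q k b1 = qdeg q (fst b1)"
  and wqdeg_b2: "wqdeg q k b2 = qdeg q (snd b2) + (k - 1)"
  using lpos_1_degrees(3)[OF basis_Lq(1,2) basis_nonzero(1) lpos_b1]
    lpos_2_degrees(3)[OF basis_Lq(3,4) basis_nonzero(2) lpos_b2] by simp_all

lemma basis_comb_wqdeg_less_iff: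
  assumes a: "a \<in> Lq q" and c: "c \<in> Lq q" and N: "wqdeg q k b1 \<le> N" "wqdeg q k b2 \<le> N"
  shows "vcomp a b1 + vcomp c b2 \<in> wqdeg_less q k N
    \<longleftrightarrow> a \<in> Lq_deg_less q (N - wqdeg q k b1) \<and> c \<in> Lq_deg_less q (N - wqdeg q k b2)"
proof -
  note b1 = lpos_1_degrees[OF basis_Lq(1,2) basis_nonzero(1) lpos_b1]
  note b2 = lpos_2_degrees[OF basis_Lq(3,4) basis_nonzero(2) lpos_b2]
  have "vcomp a b1 + vcomp c b2
      = (pcompose a (fst b1) + pcompose c (fst b2), pcompose a (snd b1) + pcompose c (snd b2))"
    by (simp add: vcomp_def)
  then have "vcomp a b1 + vcomp c b2 \<in> wqdeg_less q k N
      \<longleftrightarrow> max (degree a * degree (fst b1)) (degree c * (degree (snd b2) * q ^ (k - 1))) < q ^ N"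
    by (simp only: wqdeg_less_def mem_Collect_eq fst_conv snd_conv
        degree_pcompose_pair_max[OF b1(2) b2(2)])
  also have "\<dots> \<longleftrightarrow> degree a * q ^ wqdeg q k b1 < q ^ N \<and> degree c * q ^ wqdeg q k b2 < q ^ N"
    using degree_Lq_eq_qdeg[OF basis_Lq(1) b1(1)] degree_Lq_eq_qdeg[OF basis_Lq(4) b2(1)] b1(3) b2(3)
    by (simp add: power_add)
  finally show ?thesis using a c N by (simp add: mult_qpow_less_iff Lq_deg_less_def)
qed

text \<open>Counting through the basis, by the predictable degree property.\<close>
lemma card_Mmod_wqdeg_less_basis:
  assumes N: "wqdeg q k b1 \<le> N" "wqdeg q k b2 \<le> N"
  shows "card (Mmod q n g r \<inter> wqdeg_less q k N)
    = card (UNIV :: 'a set) ^ (N - wqdeg q k b1) * card (UNIV :: 'a set) ^ (N - wqdeg q k b2)"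
proof -
  let ?D = "Lq_deg_less q (N - wqdeg q k b1) \<times> Lq_deg_less q (N - wqdeg q k b2)"
  have Lq: "x \<in> Lq_deg_less q t \<Longrightarrow> x \<in> Lq q" for x :: "'a poly" and t
    by (simp add: Lq_deg_less_def)
  have "Mmod q n g r \<inter> wqdeg_less q k N = (\<lambda>(a, c). vcomp a b1 + vcomp c b2) ` ?D"
  proof (intro equalityI subsetI)
    fix v assume "v \<in> Mmod q n g r \<inter> wqdeg_less q k N"
    moreover obtain a c where "a \<in> Lq q" "c \<in> Lq q" "v = vcomp a b1 + vcomp c b2"
      using Mmod_basis_comb calculation by blast
    ultimately show "v \<in> (\<lambda>(a, c). vcomp a b1 + vcomp c b2) ` ?D"
      using basis_comb_wqdeg_less_iff[OF _ _ N] by auto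
  next
    fix v assume "v \<in> (\<lambda>(a, c). vcomp a b1 + vcomp c b2) ` ?D"
    then obtain a c where ac: "a \<in> Lq_deg_less q (N - wqdeg q k b1)" "c \<in> Lq_deg_less q (N - wqdeg q k b2)"
      and v: "v = vcomp a b1 + vcomp c b2"
      by auto
    show "v \<in> Mmod q n g r \<inter> wqdeg_less q k N"
      using basis_comb_wqdeg_less_iff[OF Lq Lq N] Mmod_vcomp_add[OF basis_Mmod Lq Lq] ac v by simp
  qed
  moreover have "inj_on (\<lambda>(a, c). vcomp a b1 + vcomp c b2) ?D"
  proof (rule inj_onI)
    fix x y assume "x \<in> ?D" "y \<in> ?D"
      and eq: "(\<lambda>(a, c). vcomp a b1 + vcomp c b2) x = (\<lambda>(a, c). vcomp a b1 + vcomp c b2) y"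
    moreover obtain a c a' c' where "x = (a, c)" "y = (a', c')" by fastforce
    ultimately show "x = y" using basis_comb_inject[OF Lq Lq Lq Lq] by auto
  qed
  ultimately show ?thesis by (simp add: card_image card_cartesian_product card_Lq_deg_less)
qed

lemma wqdeg_basis_sum: "wqdeg q k b1 + wqdeg q k b2 = n + (k - 1)"
proof -
  define N where "N = n + k + wqdeg q k b1 + wqdeg q k b2"
  define Q where "Q = card (UNIV :: 'a set)"
  have "Q ^ (N - wqdeg q k b1) * Q ^ (N - wqdeg q k b2) = card (Mmod q n g r \<inter> wqdeg_less q k N)"
    unfolding Q_def by (rule card_Mmod_wqdeg_less_basis[symmetric]) (simp_all add: N_def)
  also have "\<dots> = Q ^ (N - (k - 1)) * Q ^ (N - n)"
    unfolding Q_def by (rule card_Mmod_wqdeg_less) (simp add: N_def)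
  finally have "Q ^ ((N - wqdeg q k b1) + (N - wqdeg q k b2)) = Q ^ ((N - (k - 1)) + (N - n))"
    by (simp only: power_add)
  moreover have "q \<le> q ^ m" using m_pos q_ge_2 by (simp add: self_le_power)
  then have "1 < Q" using card_UNIV q_ge_2 by (simp add: Q_def)
  ultimately have "(N - wqdeg q k b1) + (N - wqdeg q k b2) = (N - (k - 1)) + (N - n)"
    by simp
  then show ?thesis unfolding N_def by arith
qed

end

theorem lemma31:
  fixes q m n k :: nat and g r :: "nat \<Rightarrow> 'a::{field,finite}" and b1 b2 :: "'a lvec"
  assumes "is_prime_power q" and "m \<ge> 1" and "card (UNIV :: 'a set) = q ^ m"
    and "1 \<le> k" and "k \<le> n"
    and "lin_indep_Fq q n g"
    and "minimal_basis q k (Mmod q n g r) {b1, b2}"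
    and "lpos q k b1 = 1" and "lpos q k b2 = 2"
  shows "wqdeg q k b1 + wqdeg q k b2 = n + k - 1 \<and> qdeg q (fst b1) + qdeg q (snd b2) = n"
proof -
  obtain p e where pe: "prime p" "1 \<le> e" "q = p ^ e"
    using assms(1) unfolding is_prime_power_def by blast
  have char: "prime CHAR('a)" by (simp add: prime_CHAR_semidom finite_imp_CHAR_pos)
  moreover have "CHAR('a) dvd p ^ (e * m)"
    using CHAR_dvd_CARD[where ?'a = 'a] assms(3) pe(3) by (simp add: power_mult)
  ultimately have "CHAR('a) = p" using pe(1) by (meson prime_dvd_power primes_dvd_imp_eq)
  then interpret interpolation_basis q e "TYPE('a)" m n g r k b1 b2
  proof unfold_locales
    show "prime CHAR('a)" by (rule char)
    show "q = CHAR('a) ^ e" using pe(3) \<open>CHAR('a) = p\<close> by simp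
    show "is_basis q (Mmod q n g r) {b1, b2}" using assms(7) by (simp add: minimal_basis_def)
  qed (use pe assms in auto)
  show ?thesis using wqdeg_basis_sum wqdeg_b1 wqdeg_b2 assms(4) by simp
qed

end
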